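(* The set of points of exact period $4$ under $G$ lies on the curve \[ u^{2}(-v^{2}+v)+u(v^{3}-v^{2}-v+1)+v^{3}+v^{2}=0, \] and the Zariski closure in $\mathbb{C}^2$ of this set is this curve (this is the equation of period four orbits on the $(u,v)$-plane).
   Context: Let \[ G(u,v)=\left(\frac{-u+v+uv}{u},\ \frac{u^{2}-u+v-u^{2}v-uv+uv^{2}+v^{2}}{u}\right), \] defined for $(u,v)\in\mathbb{C}^2$ with $u\neq 0$. A point $(u,v)$ has exact period $n$ under $G$ if the iterates $G^k(u,v)$, $0\le k\le n-1$, all have nonzero first coordinate, $G^n(u,v)=(u,v)$, and $G^k(u,v)\neq(u,v)$ for $0<k<n$. *)

theory Defs
  imports Complex_Main "HOL-Computational_Algebra.Polynomial"
begin

text \<open>The map G on pairs (u,v); only meaningful for u nonzero.\<close>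
definition G :: "complex \<times> complex \<Rightarrow> complex \<times> complex" where
  "G p = (let u = fst p; v = snd p in
     ((- u + v + u * v) / u,
      (u^2 - u + v - u^2 * v - u * v + u * v^2 + v^2) / u))"

definition exact_period :: "nat \<Rightarrow> complex \<times> complex \<Rightarrow> bool" where
  "exact_period n z \<longleftrightarrow>
     (\<forall>k<n. fst ((G ^^ k) z) \<noteq> 0) \<and> (G ^^ n) z = z \<and>
     (\<forall>k. 0 < k \<and> k < n \<longrightarrow> (G ^^ k) z \<noteq> z)"

text \<open>Bivariate complex polynomials represented as C[v][u] (outer variable u),
  evaluated at the point (u,v).\<close>
definition eval2 :: "complex poly poly \<Rightarrow> complex \<times> complex \<Rightarrow> complex" where
  "eval2 p z = poly (poly p [:snd z:]) (fst z)"

definition zariski_closure :: "(complex \<times> complex) set \<Rightarrow> (complex \<times> complex) set" where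
  "zariski_closure S =
     {z. \<forall>p. (\<forall>y\<in>S. eval2 p y = 0) \<longrightarrow> eval2 p z = 0}"

definition period4_curve :: "(complex \<times> complex) set" where
  "period4_curve = {z. let u = fst z; v = snd z in
     u^2 * (v - v^2) + u * (v^3 - v^2 - v + 1) + v^3 + v^2 = 0}"

end

theory Submission
  imports Defs
    "HOL-Computational_Algebra.Polynomial_Factorial"
    "HOL-Computational_Algebra.Fundamental_Theorem_Algebra"
    "HOL-Computational_Algebra.Field_as_Ring"
begin

text \<open>In the chart \<open>(u, e) \<mapsto> (u, u * (1 + e))\<close> the rational map \<open>G\<close> becomes the polynomial
  map \<open>F (u, e) = (u + e + u * e, u * e)\<close>. Its fixed points form the line \<open>e = 0\<close>, the line
  \<open>u = -1\<close> consists of points of period two, and off these lines \<open>F\<^sup>4 (u, e) = (u, e)\<close> forces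
  \<open>chart_curve u e = 0\<close>, the period-four curve in the new coordinates. Conversely, over all but
  finitely many \<open>v\<close> the curve has two distinct points, both of exact period four and exchanged
  by \<open>G\<^sup>2\<close>. A polynomial vanishing on the period-four points is pseudo-divided by the curve
  equation, which is quadratic in \<open>u\<close> and primitive over \<open>\<complex>[v]\<close>: the remainder is linear in
  \<open>u\<close> with two roots over infinitely many \<open>v\<close>, hence zero, and Gauss' lemma shows that the
  curve equation divides the polynomial.\<close>

section \<open>Bivariate polynomials\<close>

lemma poly_map_poly_poly_eval:
  "poly (map_poly (\<lambda>c. poly c y) r) x = poly (poly r [:x:]) y"
  by (induction r) (simp_all add: map_poly_pCons)

lemma poly_poly_eq_0_if_many_fibre_roots:
  fixes r :: "'a::idom poly poly"
  assumes "infinite Y"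
    and roots: "\<And>y. y \<in> Y \<Longrightarrow>
      \<exists>A. finite A \<and> degree r < card A \<and> (\<forall>x\<in>A. poly (poly r [:x:]) y = 0)"
  shows "r = 0"
proof (rule poly_eqI)
  fix i
  have "poly (coeff r i) y = 0" if y: "y \<in> Y" for y
  proof -
    obtain A where A: "finite A" "degree r < card A" "\<forall>x\<in>A. poly (poly r [:x:]) y = 0"
      using roots[OF y] by blast
    define ry where "ry = map_poly (\<lambda>c. poly c y) r"
    have "ry = 0"
    proof (rule ccontr)
      assume "ry \<noteq> 0"
      have "card A \<le> card {x. poly ry x = 0}"
        using A \<open>ry \<noteq> 0\<close>
        by (intro card_mono poly_roots_finite) (auto simp: ry_def poly_map_poly_poly_eval)
      also have "\<dots> \<le> degree ry" using card_poly_roots_bound[OF \<open>ry \<noteq> 0\<close>] .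
      also have "\<dots> \<le> degree r" unfolding ry_def by (rule map_poly_degree_leq)
      finally show False using A(2) by simp
    qed
    then have "coeff ry i = 0" by simp
    then show ?thesis unfolding ry_def by (simp add: coeff_map_poly)
  qed
  then have "Y \<subseteq> {y. poly (coeff r i) y = 0}" by blast
  then have "infinite {y. poly (coeff r i) y = 0}" using assms(1) finite_subset by blast
  then show "coeff r i = coeff 0 i" using poly_roots_finite by auto
qed

lemma primitive_dvd_smultD:
  fixes Q P :: "'a::{factorial_ring_gcd, semiring_gcd_mult_normalize} poly"
  assumes "content Q = 1" "Q dvd smult c P" "c \<noteq> 0"
  shows "Q dvd P"
proof -
  have "fract_poly Q dvd smult (to_fract c) (fract_poly P)"
    using fract_poly_dvd[OF assms(2)] by simp
  then have "fract_poly Q dvd fract_poly P" using assms(3) by (simp add: dvd_smult_cancel)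
  then show ?thesis using fract_poly_dvdD assms(1) by blast
qed

lemma dvd_if_vanishing_on_many_fibres:
  fixes P Q :: "'a::{factorial_ring_gcd, semiring_gcd_mult_normalize} poly poly"
  assumes "content Q = 1" "infinite Y"
    and fibres: "\<And>y. y \<in> Y \<Longrightarrow> \<exists>A. finite A \<and> degree Q \<le> card A \<and>
        (\<forall>x\<in>A. poly (poly Q [:x:]) y = 0 \<and> poly (poly P [:x:]) y = 0)"
  shows "Q dvd P"
proof -
  have "Q \<noteq> 0" using assms(1) by auto
  obtain q r where qr: "pseudo_divmod P Q = (q, r)" by fastforce
  define c where "c = coeff Q (degree Q) ^ (Suc (degree P) - degree Q)"
  have div: "smult c P = Q * q + r" and deg_r: "r = 0 \<or> degree r < degree Q"
    using pseudo_divmod[OF \<open>Q \<noteq> 0\<close> qr] unfolding c_def by auto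
  have "r = 0"
  proof (rule ccontr)
    assume "r \<noteq> 0"
    then have "degree r < degree Q" using deg_r by simp
    have "\<exists>A. finite A \<and> degree r < card A \<and> (\<forall>x\<in>A. poly (poly r [:x:]) y = 0)"
      if y: "y \<in> Y" for y
    proof -
      obtain A where A: "finite A" "degree Q \<le> card A"
        "\<forall>x\<in>A. poly (poly Q [:x:]) y = 0 \<and> poly (poly P [:x:]) y = 0"
        using fibres[OF y] by blast
      have "poly (poly r [:x:]) y = 0" if "x \<in> A" for x
      proof -
        have "poly (poly (smult c P) [:x:]) y = poly (poly (Q * q + r) [:x:]) y"
          by (simp only: div)
        then show ?thesis using A(3) that by simp
      qed
      then show ?thesis using A(1,2) \<open>degree r < degree Q\<close> by (intro exI[of _ A]) auto
    qed
    then show False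
      using poly_poly_eq_0_if_many_fibre_roots[OF \<open>infinite Y\<close>] \<open>r \<noteq> 0\<close> by blast
  qed
  then have "Q dvd smult c P" using div by simp
  moreover have "c \<noteq> 0" using \<open>Q \<noteq> 0\<close> by (simp add: c_def)
  ultimately show ?thesis using primitive_dvd_smultD[OF assms(1)] by blast
qed

lemma ex_poly_poly_swap:
  fixes p :: "'a::comm_semiring_1 poly poly"
  shows "\<exists>P. \<forall>x y. poly (poly P [:x:]) y = poly (poly p [:y:]) x"
proof (induction p)
  case 0
  show ?case by (rule exI[of _ 0]) simp
next
  case (pCons a p)
  then obtain P where P: "\<forall>x y. poly (poly P [:x:]) y = poly (poly p [:y:]) x" by blast
  have const: "poly (map_poly (\<lambda>c. [:c:]) a) [:x:] = [:poly a x:]" for x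
    by (induction a) (simp_all add: map_poly_pCons mult_ac)
  show ?case
    by (rule exI[of _ "map_poly (\<lambda>c. [:c:]) a + [:[:0, 1:]:] * P"]) (simp add: const P)
qed

lemma content_eq_1_if_no_common_root:
  fixes Q :: "complex poly poly"
  assumes "\<And>z. \<exists>i. poly (coeff Q i) z \<noteq> 0"
  shows "content Q = 1"
proof -
  have "Q \<noteq> 0" using assms[of 0] by auto
  have "\<not> constant (poly (content Q))"
    if "content Q \<noteq> 1" using that \<open>Q \<noteq> 0\<close>
    by (simp add: constant_degree flip: is_unit_content_iff is_unit_iff_degree)
  moreover have "poly (content Q) z \<noteq> 0" for z
    using assms[of z] by (metis content_dvd_coeff dvd_def mult_eq_0_iff poly_mult)
  ultimately show ?thesis using fundamental_theorem_of_algebra by blast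
qed

lemma complex_quadratic_has_root:
  fixes a b c :: complex
  assumes "a \<noteq> 0"
  shows "\<exists>x. a * x^2 + b * x + c = 0"
proof
  define s where "s = csqrt (b^2 - 4 * a * c)"
  have "s^2 = b^2 - 4 * a * c" by (simp add: s_def)
  then show "a * ((s - b) / (2 * a))^2 + b * ((s - b) / (2 * a)) + c = 0"
    using assms by (simp add: field_simps power2_eq_square) algebra
qed

section \<open>A polynomial conjugate of \<open>G\<close>\<close>

definition F :: "complex \<times> complex \<Rightarrow> complex \<times> complex" where
  "F = (\<lambda>(u, e). (u + e + u * e, u * e))"

definition chart :: "complex \<times> complex \<Rightarrow> complex \<times> complex" where
  "chart = (\<lambda>(u, e). (u, u * (1 + e)))"

lemma fst_chart [simp]: "fst (chart p) = fst p"
  by (simp add: chart_def split: prod.split)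

lemma chart_eq_chart_iff:
  assumes "fst p \<noteq> 0"
  shows "chart q = chart p \<longleftrightarrow> q = p"
  using assms by (cases p; cases q) (auto simp: chart_def)

lemma chart_divide: "u \<noteq> 0 \<Longrightarrow> chart (u, v / u - 1) = (u, v)"
  by (simp add: chart_def field_simps)

lemma G_chart: "fst p \<noteq> 0 \<Longrightarrow> G (chart p) = chart (F p)"
  by (cases p) (simp add: G_def chart_def F_def Let_def field_simps power2_eq_square)

lemma funpow_G_chart:
  "(\<forall>j<k. fst ((F ^^ j) p) \<noteq> 0) \<Longrightarrow> (G ^^ k) (chart p) = chart ((F ^^ k) p)"
  by (induction k) (simp_all add: G_chart)

lemma exact_period_chart:
  assumes "fst p \<noteq> 0"
  shows "exact_period n (chart p) \<longleftrightarrow>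
    (\<forall>k<n. fst ((F ^^ k) p) \<noteq> 0) \<and> (F ^^ n) p = p \<and>
    (\<forall>k. 0 < k \<and> k < n \<longrightarrow> (F ^^ k) p \<noteq> p)"
proof -
  have nonzero: "(\<forall>k<n. fst ((G ^^ k) (chart p)) \<noteq> 0) \<longleftrightarrow> (\<forall>k<n. fst ((F ^^ k) p) \<noteq> 0)"
    by (induction n) (auto simp: less_Suc_eq funpow_G_chart)
  show ?thesis
  proof (cases "\<forall>k<n. fst ((F ^^ k) p) \<noteq> 0")
    case True
    then have "(G ^^ k) (chart p) = chart ((F ^^ k) p)" if "k \<le> n" for k
      using that by (intro funpow_G_chart) auto
    then show ?thesis
      using True nonzero chart_eq_chart_iff[OF assms] unfolding exact_period_def by auto
  next
    case False
    then show ?thesis using nonzero unfolding exact_period_def by auto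
  qed
qed

lemma exact_period_G:
  assumes "exact_period n z"
  shows "exact_period n (G z)"
proof -
  have per: "(G ^^ n) z = z" and nonzero: "\<forall>k<n. fst ((G ^^ k) z) \<noteq> 0"
    and minimal: "\<forall>k. 0 < k \<and> k < n \<longrightarrow> (G ^^ k) z \<noteq> z"
    using assms unfolding exact_period_def by auto
  have shift: "(G ^^ k) (G z) = (G ^^ Suc k) z" for k
    by (simp add: funpow_swap1)
  have "fst ((G ^^ k) (G z)) \<noteq> 0" if "k < n" for k
  proof (cases "Suc k = n")
    case True
    then have "(G ^^ k) (G z) = z" by (simp only: shift per)
    then show ?thesis using nonzero that by fastforce
  next
    case False
    then have "Suc k < n" using that by simp
    then show ?thesis using nonzero by (simp only: shift) blast
  qed
  moreover have "(G ^^ n) (G z) = G z"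
    by (simp add: funpow_swap1 [symmetric] per)
  moreover have "(G ^^ k) (G z) \<noteq> G z" if "0 < k" "k < n" for k
  proof
    assume "(G ^^ k) (G z) = G z"
    then have "(G ^^ (n - 1)) ((G ^^ k) (G z)) = (G ^^ (n - 1)) (G z)" by simp
    moreover have "(G ^^ (n - 1)) (G z) = z" using that per by (simp add: shift)
    moreover have "(G ^^ (n - 1)) ((G ^^ k) (G z)) = (G ^^ k) ((G ^^ (n - 1)) (G z))"
      by (metis add.commute comp_apply funpow_add)
    ultimately have "(G ^^ k) z = z" by simp
    then show False using minimal that by blast
  qed
  ultimately show ?thesis unfolding exact_period_def by blast
qed

section \<open>Points of period four\<close>

definition curve_poly :: "complex \<Rightarrow> complex \<Rightarrow> complex" where
  "curve_poly u v = u^2 * (v - v^2) + u * (v^3 - v^2 - v + 1) + v^3 + v^2"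

lemma mem_period4_curve: "(u, v) \<in> period4_curve \<longleftrightarrow> curve_poly u v = 0"
  by (simp add: period4_curve_def curve_poly_def)

definition chart_curve :: "complex \<Rightarrow> complex \<Rightarrow> complex" where
  "chart_curve u e = 1 + u * e * (1 + e) + u^2 * (1 + e) * (1 + e + e^2) + u^3 * e * (1 + e)^2"

lemma curve_poly_chart: "curve_poly u (u * (1 + e)) = u * chart_curve u e"
  unfolding curve_poly_def chart_curve_def by algebra

lemma chart_curve_if_period_4:
  assumes "(F ^^ 4) (u, e) = (u, e)" "e \<noteq> 0" "u \<noteq> -1"
  shows "chart_curve u e = 0"
  using assms unfolding chart_curve_def by (simp add: numeral_eq_Suc F_def) algebra

lemma period_4_if_chart_curve: "chart_curve u e = 0 \<Longrightarrow> (F ^^ 4) (u, e) = (u, e)"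
  unfolding chart_curve_def by (simp add: numeral_eq_Suc F_def) algebra

lemma chart_F2_if_chart_curve:
  "chart_curve u e = 0 \<Longrightarrow> chart ((F ^^ 2) (u, e)) = (fst ((F ^^ 2) (u, e)), u * (1 + e))"
  unfolding chart_curve_def by (simp add: numeral_eq_Suc F_def chart_def) algebra

lemma all_less_4: "(\<forall>k<4. P k) \<longleftrightarrow> P 0 \<and> P 1 \<and> P 2 \<and> P 3" for P :: "nat \<Rightarrow> bool"
  by (auto simp: numeral_eq_Suc less_Suc_eq)

lemma chart_curve_orbit_off_axis:
  assumes "chart_curve u e = 0" "v = u * (1 + e)" "v * (1 - v) * (1 + v) \<noteq> 0"
  shows "\<forall>k<4. fst ((F ^^ k) (u, e)) \<noteq> 0"
  using assms unfolding all_less_4 chart_curve_def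
  by (simp add: numeral_eq_Suc F_def del: mult_eq_0_iff) (intro conjI; algebra)

lemma chart_curve_not_period_2:
  assumes "chart_curve u e = 0" "v = u * (1 + e)"
    "v * (1 - v) * (1 + v) * (1 - 2 * v - 2 * v^3 - v^4) \<noteq> 0"
  shows "fst ((F ^^ 2) (u, e)) \<noteq> u"
  using assms unfolding chart_curve_def
  by (simp add: numeral_eq_Suc F_def del: mult_eq_0_iff) algebra

lemma period4_subset_curve:
  assumes "exact_period 4 z"
  shows "z \<in> period4_curve"
proof -
  obtain u v where z: "z = (u, v)" by fastforce
  have "\<forall>k<4. fst ((G ^^ k) z) \<noteq> 0" using assms unfolding exact_period_def by blast
  then have "u \<noteq> 0" using z by (metis fst_conv funpow_0 zero_less_numeral)
  define e where "e = v / u - 1"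
  have "chart (u, e) = z" using \<open>u \<noteq> 0\<close> z by (simp add: e_def chart_divide)
  moreover have "fst (u, e) \<noteq> 0" using \<open>u \<noteq> 0\<close> by simp
  ultimately have per: "(F ^^ 4) (u, e) = (u, e)"
    and minimal: "\<forall>k. 0 < k \<and> k < 4 \<longrightarrow> (F ^^ k) (u, e) \<noteq> (u, e)"
    using assms exact_period_chart by blast+
  have "e \<noteq> 0"
  proof
    assume "e = 0"
    then have "(F ^^ 1) (u, e) = (u, e)" by (simp add: F_def)
    then show False using minimal[rule_format, of 1] by simp
  qed
  moreover have "u \<noteq> -1"
  proof
    assume "u = -1"
    then have "(F ^^ 2) (u, e) = (u, e)" by (simp add: numeral_eq_Suc F_def)
    then show False using minimal[rule_format, of 2] by simp
  qed
  ultimately have "chart_curve u e = 0" using per by (intro chart_curve_if_period_4)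
  then have "curve_poly u (u * (1 + e)) = 0" by (simp add: curve_poly_chart)
  moreover have "u * (1 + e) = v" using \<open>u \<noteq> 0\<close> by (simp add: e_def field_simps)
  ultimately show ?thesis by (simp add: z mem_period4_curve)
qed

definition degenerate_fibres :: "complex poly" where
  "degenerate_fibres = [:0, 1, 0, -1:] * [:1, -2, 0, -2, -1:]"

text \<open>The factor \<open>v * (1 - v) * (1 + v)\<close> covers the fibres where the curve equation drops
  degree in \<open>u\<close> or an orbit point has \<open>u = 0\<close>. The quartic is, up to \<open>(1 - v) * (1 + v)\<close>,
  the discriminant in \<open>u\<close>, so off these fibres the two points over \<open>v\<close> are distinct.\<close>

lemma poly_degenerate_fibres:
  "poly degenerate_fibres v = v * (1 - v) * (1 + v) * (1 - 2 * v - 2 * v^3 - v^4)"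
  unfolding degenerate_fibres_def by simp algebra

lemma two_period4_points_on_fibre:
  assumes "poly degenerate_fibres v \<noteq> 0"
  shows "\<exists>u u'. u \<noteq> u' \<and> exact_period 4 (u, v) \<and> exact_period 4 (u', v)"
proof -
  have v: "v * (1 - v) * (1 + v) \<noteq> 0"
    and disc: "v * (1 - v) * (1 + v) * (1 - 2 * v - 2 * v^3 - v^4) \<noteq> 0"
    using assms by (simp_all add: poly_degenerate_fibres)
  have "v - v^2 = v * (1 - v)" by (simp add: power2_eq_square algebra_simps)
  then have "v - v^2 \<noteq> 0" using v by simp
  then obtain u where "(v - v^2) * u^2 + (v^3 - v^2 - v + 1) * u + (v^3 + v^2) = 0"
    using complex_quadratic_has_root by blast
  then have root: "curve_poly u v = 0" unfolding curve_poly_def by algebra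
  have "u \<noteq> 0"
  proof
    assume "u = 0"
    then have "v^2 * (1 + v) = 0"
      using root by (simp add: curve_poly_def algebra_simps power2_eq_square power3_eq_cube)
    then show False using v by simp
  qed
  define e where "e = v / u - 1"
  have chart_ue: "chart (u, e) = (u, v)" using \<open>u \<noteq> 0\<close> by (simp add: e_def chart_divide)
  have v_eq: "v = u * (1 + e)" using \<open>u \<noteq> 0\<close> by (simp add: e_def field_simps)
  have on_curve: "chart_curve u e = 0"
    using root \<open>u \<noteq> 0\<close> curve_poly_chart[of u e] v_eq by simp
  note nonzero = chart_curve_orbit_off_axis[OF on_curve v_eq v]
  note per = period_4_if_chart_curve[OF on_curve]
  define u' where "u' = fst ((F ^^ 2) (u, e))"
  have "u' \<noteq> u" using chart_curve_not_period_2[OF on_curve v_eq disc] by (simp add: u'_def)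
  then have not2: "(F ^^ 2) (u, e) \<noteq> (u, e)" by (auto simp: u'_def)
  have not1: "F (u, e) \<noteq> (u, e)" using not2 by (auto simp: numeral_eq_Suc)
  have not3: "(F ^^ 3) (u, e) \<noteq> (u, e)"
  proof
    assume "(F ^^ 3) (u, e) = (u, e)"
    then have "(F ^^ 4) (u, e) = F (u, e)" by (simp add: numeral_eq_Suc)
    then show False using per not1 by simp
  qed
  have "(F ^^ k) (u, e) \<noteq> (u, e)" if "0 < k" "k < 4" for k
  proof -
    have "k = 1 \<or> k = 2 \<or> k = 3" using that by linarith
    then show ?thesis using not1 not2 not3 by auto
  qed
  then have "exact_period 4 (u, v)"
    using exact_period_chart[of "(u, e)" 4] \<open>u \<noteq> 0\<close> nonzero per chart_ue by simp
  moreover have "G (G (u, v)) = (u', v)"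
  proof -
    have "(G ^^ 2) (chart (u, e)) = chart ((F ^^ 2) (u, e))"
      using nonzero by (intro funpow_G_chart) simp
    also have "\<dots> = (u', v)"
      using chart_F2_if_chart_curve[OF on_curve] v_eq by (simp add: u'_def)
    finally show ?thesis by (simp add: chart_ue numeral_eq_Suc)
  qed
  ultimately have "exact_period 4 (u', v)" by (metis exact_period_G)
  then show ?thesis using \<open>exact_period 4 (u, v)\<close> \<open>u' \<noteq> u\<close> by blast
qed

section \<open>The Zariski closure\<close>

definition curve_poly_u :: "complex poly poly" where
  "curve_poly_u = [:[:0, 0, 1, 1:], [:1, -1, -1, 1:], [:0, 1, -1:]:]"

lemma poly_curve_poly_u: "poly (poly curve_poly_u [:u:]) v = curve_poly u v"
  unfolding curve_poly_u_def curve_poly_def by simp algebra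

lemma degree_curve_poly_u: "degree curve_poly_u = 2"
  by (simp add: curve_poly_u_def)

lemma content_curve_poly_u: "content curve_poly_u = 1"
proof (rule content_eq_1_if_no_common_root)
  fix z :: complex
  show "\<exists>i. poly (coeff curve_poly_u i) z \<noteq> 0"
  proof (cases "z = 0 \<or> z = -1")
    case True
    then show ?thesis
      by (intro exI[of _ "if z = 0 then 1 else 2"]) (auto simp: curve_poly_u_def numeral_2_eq_2)
  next
    case False
    then have "poly (coeff curve_poly_u 0) z \<noteq> 0"
      by (simp add: curve_poly_u_def add_eq_0_iff)
    then show ?thesis by blast
  qed
qed

definition curve_poly_v :: "complex poly poly" where
  "curve_poly_v = [:[:0, 1:], [:0, -1, 1:], [:1, -1, -1:], [:1, 1:]:]"

lemma eval2_curve_poly_v: "eval2 curve_poly_v (u, v) = curve_poly u v"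
  unfolding eval2_def curve_poly_v_def curve_poly_def by simp algebra

lemma infinite_nondegenerate_fibres: "infinite {v. poly degenerate_fibres v \<noteq> 0}"
proof -
  have "degenerate_fibres \<noteq> 0" by (simp add: degenerate_fibres_def)
  then have "finite {v. poly degenerate_fibres v = 0}" by (rule poly_roots_finite)
  then have "infinite (UNIV - {v. poly degenerate_fibres v = 0})"
    by (intro Diff_infinite_finite) (simp_all add: infinite_UNIV_char_0)
  then show ?thesis by (simp add: set_diff_eq)
qed

lemma eval2_eq_0_on_curve:
  assumes vanish: "\<And>y. exact_period 4 y \<Longrightarrow> eval2 p y = 0" and "z \<in> period4_curve"
  shows "eval2 p z = 0"
proof -
  obtain P where P: "\<And>u v. poly (poly P [:u:]) v = eval2 p (u, v)"
    using ex_poly_poly_swap[of p] by (auto simp: eval2_def)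
  have "curve_poly_u dvd P"
  proof (rule dvd_if_vanishing_on_many_fibres
      [OF content_curve_poly_u infinite_nondegenerate_fibres])
    fix v assume "v \<in> {v. poly degenerate_fibres v \<noteq> 0}"
    then obtain u u' where uu': "u \<noteq> u'" "exact_period 4 (u, v)" "exact_period 4 (u', v)"
      using two_period4_points_on_fibre by blast
    have "poly (poly curve_poly_u [:x:]) v = 0 \<and> poly (poly P [:x:]) v = 0" if "x \<in> {u, u'}" for x
      using that uu' period4_subset_curve vanish
      by (auto simp: poly_curve_poly_u P mem_period4_curve)
    then show "\<exists>A. finite A \<and> degree curve_poly_u \<le> card A \<and>
        (\<forall>x\<in>A. poly (poly curve_poly_u [:x:]) v = 0 \<and> poly (poly P [:x:]) v = 0)"
      using \<open>u \<noteq> u'\<close> by (intro exI[of _ "{u, u'}"]) (simp add: degree_curve_poly_u)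
  qed
  then obtain R where "P = curve_poly_u * R" by (elim dvdE)
  moreover obtain u v where z: "z = (u, v)" by (cases z)
  moreover have "curve_poly u v = 0" using \<open>z \<in> period4_curve\<close> z by (simp add: mem_period4_curve)
  ultimately show ?thesis using P[of u v] by (simp add: poly_curve_poly_u)
qed

theorem mainTheorem6:
  shows "{z. exact_period 4 z} \<subseteq> period4_curve \<and>
         zariski_closure {z. exact_period 4 z} = period4_curve"
proof (intro conjI equalityI subsetI)
  show "z \<in> period4_curve" if "z \<in> {z. exact_period 4 z}" for z
    using that period4_subset_curve by blast
  show "z \<in> period4_curve" if "z \<in> zariski_closure {z. exact_period 4 z}" for z
  proof -
    have "\<forall>y\<in>{z. exact_period 4 z}. eval2 curve_poly_v y = 0"
      using period4_subset_curve by (auto simp: eval2_curve_poly_v mem_period4_curve)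
    then have "eval2 curve_poly_v z = 0" using that unfolding zariski_closure_def by blast
    then show ?thesis by (cases z) (simp add: eval2_curve_poly_v mem_period4_curve)
  qed
  show "z \<in> zariski_closure {z. exact_period 4 z}" if "z \<in> period4_curve" for z
    using that eval2_eq_0_on_curve unfolding zariski_closure_def by blast
qed

end
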